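(* Let $\{Y_x\}_{x\in\mathcal{X}}$ be a Gaussian process with prior mean $\mu_x$ and prior covariance $\sigma_{xx'}$. Let $\mathcal{D}\subset\mathcal{X}$ be a finite set of inputs with observed outputs $y_{\mathcal{D}}$, partitioned into pairwise disjoint sets $\mathcal{D}_1,\ldots,\mathcal{D}_M$ with $|\mathcal{D}_m|=|\mathcal{D}|/M$, and let $\mathcal{U}\subseteq\mathcal{X}\setminus\mathcal{D}$ be a finite set of test inputs partitioned into pairwise disjoint sets $\mathcal{U}_1,\ldots,\mathcal{U}_M$ with $|\mathcal{U}_m|=|\mathcal{U}|/M$. Let $\mathcal{S}\subset\mathcal{X}$ be a finite support set (common to all $M$ machines), and assume all matrix inverses below exist. For $\mathcal{B},\mathcal{B}'\subset\mathcal{X}$ and $m=1,\ldots,M$ define the local summary quantities $\dot{y}^m_{\mathcal{B}}\triangleq \Sigma_{\mathcal{B}\mathcal{D}_m}\Sigma^{-1}_{\mathcal{D}_m\mathcal{D}_m|\mathcal{S}}(y_{\mathcal{D}_m}-\mu_{\mathcal{D}_m})$ and $\dot{\Sigma}^m_{\mathcal{B}\mathcal{B}'}\triangleq \Sigma_{\mathcal{B}\mathcal{D}_m}\Sigma^{-1}_{\mathcal{D}_m\mathcal{D}_m|\mathcal{S}}\Sigma_{\mathcal{D}_m\mathcal{B}'}$, the global summary $\ddot{y}_{\mathcal{S}}\triangleq\sum_{m=1}^M\dot{y}^m_{\mathcal{S}}$ and $\ddot{\Sigma}_{\mathcal{S}\mathcal{S}}\triangleq\Sigma_{\mathcal{S}\mathcal{S}}+\sum_{m=1}^M\dot{\Sigma}^m_{\mathcal{S}\mathcal{S}}$,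 and $\Phi^m_{\mathcal{U}_m\mathcal{S}}\triangleq \Sigma_{\mathcal{U}_m\mathcal{S}}+\Sigma_{\mathcal{U}_m\mathcal{S}}\Sigma^{-1}_{\mathcal{S}\mathcal{S}}\dot{\Sigma}^m_{\mathcal{S}\mathcal{S}}-\dot{\Sigma}^m_{\mathcal{U}_m\mathcal{S}}$, with $\Phi^m_{\mathcal{S}\mathcal{U}_m}$ its transpose. Define the pPIC predictive mean and covariance blockwise by $$\widehat{\mu}^+_{\mathcal{U}_m}\triangleq\mu_{\mathcal{U}_m}+\left(\Phi^m_{\mathcal{U}_m\mathcal{S}}\ddot{\Sigma}^{-1}_{\mathcal{S}\mathcal{S}}\ddot{y}_{\mathcal{S}}-\Sigma_{\mathcal{U}_m\mathcal{S}}\Sigma^{-1}_{\mathcal{S}\mathcal{S}}\dot{y}^m_{\mathcal{S}}\right)+\dot{y}^m_{\mathcal{U}_m},$$ $$\widehat{\Sigma}^+_{\mathcal{U}_m\mathcal{U}_m}\triangleq\Sigma_{\mathcal{U}_m\mathcal{U}_m}-\left(\Phi^m_{\mathcal{U}_m\mathcal{S}}\Sigma^{-1}_{\mathcal{S}\mathcal{S}}\Sigma_{\mathcal{S}\mathcal{U}_m}-\Sigma_{\mathcal{U}_m\mathcal{S}}\Sigma^{-1}_{\mathcal{S}\mathcal{S}}\dot{\Sigma}^m_{\mathcal{S}\mathcal{U}_m}-\Phi^m_{\mathcal{U}_m\mathcal{S}}\ddot{\Sigma}^{-1}_{\mathcal{S}\mathcal{S}}\Phi^m_{\mathcal{S}\mathcal{U}_m}\right)-\dot{\Sigma}^m_{\mathcal{U}_m\mathcal{U}_m},$$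 and for $i\neq j$, $\widehat{\Sigma}^+_{\mathcal{U}_i\mathcal{U}_j}\triangleq\Sigma_{\mathcal{U}_i\mathcal{U}_j|\mathcal{S}}+\Phi^i_{\mathcal{U}_i\mathcal{S}}\ddot{\Sigma}^{-1}_{\mathcal{S}\mathcal{S}}\Phi^j_{\mathcal{S}\mathcal{U}_j}$; let $\widehat{\mu}^+_{\mathcal{U}}$ and $\widehat{\Sigma}^+_{\mathcal{U}\mathcal{U}}$ be the vector and matrix assembled from these blocks. Let the centralized PIC predictive distribution be $\mathcal{N}(\mu^{\mathrm{PIC}}_{\mathcal{U}|\mathcal{D}},\Sigma^{\mathrm{PIC}}_{\mathcal{U}\mathcal{U}|\mathcal{D}})$ with $$\mu^{\mathrm{PIC}}_{\mathcal{U}|\mathcal{D}}\triangleq\mu_{\mathcal{U}}+\widetilde{\Gamma}_{\mathcal{U}\mathcal{D}}(\Gamma_{\mathcal{D}\mathcal{D}}+\Lambda)^{-1}(y_{\mathcal{D}}-\mu_{\mathcal{D}}),\qquad \Sigma^{\mathrm{PIC}}_{\mathcal{U}\mathcal{U}|\mathcal{D}}\triangleq\Sigma_{\mathcal{U}\mathcal{U}}-\widetilde{\Gamma}_{\mathcal{U}\mathcal{D}}(\Gamma_{\mathcal{D}\mathcal{D}}+\Lambda)^{-1}\widetilde{\Gamma}_{\mathcal{D}\mathcal{U}},$$ where $\Gamma_{\mathcal{B}\mathcal{B}'}\triangleq\Sigma_{\mathcal{B}\mathcal{S}}\Sigma^{-1}_{\mathcal{S}\mathcal{S}}\Sigma_{\mathcal{S}\mathcal{B}'}$,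 $\Lambda$ is the block-diagonal matrix whose diagonal blocks are $\Sigma_{\mathcal{D}_m\mathcal{D}_m|\mathcal{S}}$ for $m=1,\ldots,M$, $\widetilde{\Gamma}_{\mathcal{U}\mathcal{D}}$ is the block matrix $(\widetilde{\Gamma}_{\mathcal{U}_i\mathcal{D}_m})_{i,m=1,\ldots,M}$ with $\widetilde{\Gamma}_{\mathcal{U}_i\mathcal{D}_m}=\Sigma_{\mathcal{U}_i\mathcal{D}_m}$ if $i=m$ and $\widetilde{\Gamma}_{\mathcal{U}_i\mathcal{D}_m}=\Gamma_{\mathcal{U}_i\mathcal{D}_m}$ otherwise, and $\widetilde{\Gamma}_{\mathcal{D}\mathcal{U}}$ is its transpose. Then $\widehat{\mu}^+_{\mathcal{U}}=\mu^{\mathrm{PIC}}_{\mathcal{U}|\mathcal{D}}$ and $\widehat{\Sigma}^+_{\mathcal{U}\mathcal{U}}=\Sigma^{\mathrm{PIC}}_{\mathcal{U}\mathcal{U}|\mathcal{D}}$.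
   Context: For finite sets $\mathcal{A},\mathcal{B}\subset\mathcal{X}$, $\mu_{\mathcal{A}}$ denotes the column vector of prior means $\mu_x$, $x\in\mathcal{A}$, and $\Sigma_{\mathcal{A}\mathcal{B}}$ the matrix of prior covariances $\sigma_{xx'}$, $x\in\mathcal{A}$, $x'\in\mathcal{B}$; $\Sigma_{\mathcal{B}\mathcal{A}}$ is the transpose of $\Sigma_{\mathcal{A}\mathcal{B}}$. The posterior covariance given $\mathcal{S}$ is $\Sigma_{\mathcal{A}\mathcal{B}|\mathcal{S}}\triangleq\Sigma_{\mathcal{A}\mathcal{B}}-\Sigma_{\mathcal{A}\mathcal{S}}\Sigma^{-1}_{\mathcal{S}\mathcal{S}}\Sigma_{\mathcal{S}\mathcal{B}}$. The vectors/matrices indexed by $\mathcal{D}$ and $\mathcal{U}$ are ordered consistently with the partitions $\mathcal{D}_1,\ldots,\mathcal{D}_M$ and $\mathcal{U}_1,\ldots,\mathcal{U}_M$. *)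

theory Defs
  imports Complex_Main
begin

text \<open>Matrices indexed by finite subsets of the input domain 'x are represented as
  functions 'x \<Rightarrow> 'x \<Rightarrow> real (only entries on the relevant index sets matter);
  vectors as functions 'x \<Rightarrow> real.\<close>

definition is_inv_on :: "'x set \<Rightarrow> ('x \<Rightarrow> 'x \<Rightarrow> real) \<Rightarrow> ('x \<Rightarrow> 'x \<Rightarrow> real) \<Rightarrow> bool" where
  "is_inv_on A P Q \<longleftrightarrow>
     (\<forall>i\<in>A. \<forall>j\<in>A. (\<Sum>k\<in>A. P i k * Q k j) = (if i = j then 1 else 0)
                 \<and> (\<Sum>k\<in>A. Q i k * P k j) = (if i = j then 1 else 0))"

definition invertible_on :: "'x set \<Rightarrow> ('x \<Rightarrow> 'x \<Rightarrow> real) \<Rightarrow> bool" where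
  "invertible_on A P \<longleftrightarrow> (\<exists>Q. is_inv_on A P Q)"

definition minv :: "'x set \<Rightarrow> ('x \<Rightarrow> 'x \<Rightarrow> real) \<Rightarrow> ('x \<Rightarrow> 'x \<Rightarrow> real)" where
  "minv A P = (let Q = (SOME Q. is_inv_on A P Q) in (\<lambda>i j. if i \<in> A \<and> j \<in> A then Q i j else 0))"

definition tri :: "'x set \<Rightarrow> 'x set \<Rightarrow> ('x \<Rightarrow> 'x \<Rightarrow> real) \<Rightarrow> ('x \<Rightarrow> 'x \<Rightarrow> real)
                     \<Rightarrow> ('x \<Rightarrow> 'x \<Rightarrow> real) \<Rightarrow> 'x \<Rightarrow> 'x \<Rightarrow> real" where
  "tri A B P Q R i j = (\<Sum>k\<in>A. \<Sum>l\<in>B. P i k * Q k l * R l j)"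

definition triv :: "'x set \<Rightarrow> 'x set \<Rightarrow> ('x \<Rightarrow> 'x \<Rightarrow> real) \<Rightarrow> ('x \<Rightarrow> 'x \<Rightarrow> real)
                     \<Rightarrow> ('x \<Rightarrow> real) \<Rightarrow> 'x \<Rightarrow> real" where
  "triv A B P Q v i = (\<Sum>k\<in>A. \<Sum>l\<in>B. P i k * Q k l * v l)"

definition Gam :: "('x \<Rightarrow> 'x \<Rightarrow> real) \<Rightarrow> 'x set \<Rightarrow> 'x \<Rightarrow> 'x \<Rightarrow> real" where
  "Gam \<sigma> S = tri S S \<sigma> (minv S \<sigma>) \<sigma>"

definition condcov :: "('x \<Rightarrow> 'x \<Rightarrow> real) \<Rightarrow> 'x set \<Rightarrow> 'x \<Rightarrow> 'x \<Rightarrow> real" where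
  "condcov \<sigma> S = (\<lambda>i j. \<sigma> i j - Gam \<sigma> S i j)"

definition ydot :: "('x \<Rightarrow> real) \<Rightarrow> ('x \<Rightarrow> 'x \<Rightarrow> real) \<Rightarrow> ('x \<Rightarrow> real) \<Rightarrow> 'x set \<Rightarrow> 'x set \<Rightarrow> 'x \<Rightarrow> real" where
  "ydot \<mu> \<sigma> y S Dm = triv Dm Dm \<sigma> (minv Dm (condcov \<sigma> S)) (\<lambda>l. y l - \<mu> l)"

definition Sdot :: "('x \<Rightarrow> 'x \<Rightarrow> real) \<Rightarrow> 'x set \<Rightarrow> 'x set \<Rightarrow> 'x \<Rightarrow> 'x \<Rightarrow> real" where
  "Sdot \<sigma> S Dm = tri Dm Dm \<sigma> (minv Dm (condcov \<sigma> S)) \<sigma>"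

definition yddot :: "('x \<Rightarrow> real) \<Rightarrow> ('x \<Rightarrow> 'x \<Rightarrow> real) \<Rightarrow> ('x \<Rightarrow> real) \<Rightarrow> 'x set
                      \<Rightarrow> nat \<Rightarrow> (nat \<Rightarrow> 'x set) \<Rightarrow> 'x \<Rightarrow> real" where
  "yddot \<mu> \<sigma> y S M D = (\<lambda>i. \<Sum>m\<in>{1..M}. ydot \<mu> \<sigma> y S (D m) i)"

definition Sddot :: "('x \<Rightarrow> 'x \<Rightarrow> real) \<Rightarrow> 'x set \<Rightarrow> nat \<Rightarrow> (nat \<Rightarrow> 'x set) \<Rightarrow> 'x \<Rightarrow> 'x \<Rightarrow> real" where
  "Sddot \<sigma> S M D = (\<lambda>i j. \<sigma> i j + (\<Sum>m\<in>{1..M}. Sdot \<sigma> S (D m) i j))"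

text \<open>Phi^m_{U_m S}; entry (u,s).  Its transpose Phi^m_{S U_m} has entry (s,u) = Phi u s.\<close>
definition Phi :: "('x \<Rightarrow> 'x \<Rightarrow> real) \<Rightarrow> 'x set \<Rightarrow> 'x set \<Rightarrow> 'x \<Rightarrow> 'x \<Rightarrow> real" where
  "Phi \<sigma> S Dm = (\<lambda>u s. \<sigma> u s + tri S S \<sigma> (minv S \<sigma>) (Sdot \<sigma> S Dm) u s - Sdot \<sigma> S Dm u s)"

text \<open>pPIC predictive mean at u, where u belongs to the test block of machine m.\<close>
definition mu_pPIC :: "('x \<Rightarrow> real) \<Rightarrow> ('x \<Rightarrow> 'x \<Rightarrow> real) \<Rightarrow> ('x \<Rightarrow> real) \<Rightarrow> 'x set
                        \<Rightarrow> nat \<Rightarrow> (nat \<Rightarrow> 'x set) \<Rightarrow> nat \<Rightarrow> 'x \<Rightarrow> real" where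
  "mu_pPIC \<mu> \<sigma> y S M D m u =
     \<mu> u + (triv S S (Phi \<sigma> S (D m)) (minv S (Sddot \<sigma> S M D)) (yddot \<mu> \<sigma> y S M D) u
             - triv S S \<sigma> (minv S \<sigma>) (ydot \<mu> \<sigma> y S (D m)) u)
         + ydot \<mu> \<sigma> y S (D m) u"

text \<open>pPIC predictive covariance at (u,v), u in test block i, v in test block j.\<close>
definition Sigma_pPIC :: "('x \<Rightarrow> 'x \<Rightarrow> real) \<Rightarrow> 'x set \<Rightarrow> nat \<Rightarrow> (nat \<Rightarrow> 'x set)
                           \<Rightarrow> nat \<Rightarrow> nat \<Rightarrow> 'x \<Rightarrow> 'x \<Rightarrow> real" where
  "Sigma_pPIC \<sigma> S M D i j u v =
     (if i = j then
        \<sigma> u v - (tri S S (Phi \<sigma> S (D i)) (minv S \<sigma>) \<sigma> u v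
                 - tri S S \<sigma> (minv S \<sigma>) (Sdot \<sigma> S (D i)) u v
                 - tri S S (Phi \<sigma> S (D i)) (minv S (Sddot \<sigma> S M D)) (\<lambda>s w. Phi \<sigma> S (D i) w s) u v)
              - Sdot \<sigma> S (D i) u v
      else
        condcov \<sigma> S u v
          + tri S S (Phi \<sigma> S (D i)) (minv S (Sddot \<sigma> S M D)) (\<lambda>s w. Phi \<sigma> S (D j) w s) u v)"

definition Lam :: "('x \<Rightarrow> 'x \<Rightarrow> real) \<Rightarrow> 'x set \<Rightarrow> nat \<Rightarrow> (nat \<Rightarrow> 'x set) \<Rightarrow> 'x \<Rightarrow> 'x \<Rightarrow> real" where
  "Lam \<sigma> S M D = (\<lambda>i j. if \<exists>m\<in>{1..M}. i \<in> D m \<and> j \<in> D m then condcov \<sigma> S i j else 0)"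

definition GamT :: "('x \<Rightarrow> 'x \<Rightarrow> real) \<Rightarrow> 'x set \<Rightarrow> nat \<Rightarrow> (nat \<Rightarrow> 'x set) \<Rightarrow> (nat \<Rightarrow> 'x set)
                     \<Rightarrow> 'x \<Rightarrow> 'x \<Rightarrow> real" where
  "GamT \<sigma> S M D U = (\<lambda>u d. if \<exists>m\<in>{1..M}. u \<in> U m \<and> d \<in> D m then \<sigma> u d else Gam \<sigma> S u d)"

definition PICK :: "('x \<Rightarrow> 'x \<Rightarrow> real) \<Rightarrow> 'x set \<Rightarrow> nat \<Rightarrow> (nat \<Rightarrow> 'x set) \<Rightarrow> 'x \<Rightarrow> 'x \<Rightarrow> real" where
  "PICK \<sigma> S M D = (\<lambda>i j. Gam \<sigma> S i j + Lam \<sigma> S M D i j)"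

definition mu_PIC :: "('x \<Rightarrow> real) \<Rightarrow> ('x \<Rightarrow> 'x \<Rightarrow> real) \<Rightarrow> ('x \<Rightarrow> real) \<Rightarrow> 'x set \<Rightarrow> nat
                       \<Rightarrow> (nat \<Rightarrow> 'x set) \<Rightarrow> (nat \<Rightarrow> 'x set) \<Rightarrow> 'x \<Rightarrow> real" where
  "mu_PIC \<mu> \<sigma> y S M D U u =
     \<mu> u + triv (\<Union>m\<in>{1..M}. D m) (\<Union>m\<in>{1..M}. D m) (GamT \<sigma> S M D U)
              (minv (\<Union>m\<in>{1..M}. D m) (PICK \<sigma> S M D)) (\<lambda>l. y l - \<mu> l) u"

definition Sigma_PIC :: "('x \<Rightarrow> 'x \<Rightarrow> real) \<Rightarrow> 'x set \<Rightarrow> nat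
                       \<Rightarrow> (nat \<Rightarrow> 'x set) \<Rightarrow> (nat \<Rightarrow> 'x set) \<Rightarrow> 'x \<Rightarrow> 'x \<Rightarrow> real" where
  "Sigma_PIC \<sigma> S M D U u v =
     \<sigma> u v - tri (\<Union>m\<in>{1..M}. D m) (\<Union>m\<in>{1..M}. D m) (GamT \<sigma> S M D U)
              (minv (\<Union>m\<in>{1..M}. D m) (PICK \<sigma> S M D)) (\<lambda>d w. GamT \<sigma> S M D U w d) u v"

end

theory Submission
  imports Defs
begin

text \<open>For a test input u of block U_i the PIC weight row
  w_u = \<Gamma>~_{uD} (\<Gamma>_{DD} + \<Lambda>)^{-1} has the closed form
    w_u = \<Sigma>_{uD_i|S} \<Sigma>^{-1}_{D_iD_i|S} + \<Phi>^i_{uS} \<Sigma>''^{-1}_{SS} \<Sigma>_{SD} \<Lambda>^{-1},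
  where \<Sigma>'' is the global summary. Because \<Lambda> is block diagonal,
  \<Sigma>_{SD} \<Lambda>^{-1} \<Sigma>_{DS} = \<Sigma>''_{SS} - \<Sigma>_{SS}; with this identity one checks
  w_u (\<Gamma>_{DD} + \<Lambda>) = \<Gamma>~_{uD} directly, so w_u is the PIC weight row by uniqueness of
  inverses. Substituting w_u into the PIC mean and covariance and expanding with the same
  identity yields the pPIC blocks.\<close>

section \<open>Vector-matrix products over finite index sets\<close>

definition vmult :: "'x set \<Rightarrow> ('x \<Rightarrow> real) \<Rightarrow> ('x \<Rightarrow> 'x \<Rightarrow> real) \<Rightarrow> 'x \<Rightarrow> real" where
  "vmult A w P = (\<lambda>j. \<Sum>k\<in>A. w k * P k j)"

definition dot :: "'x set \<Rightarrow> ('x \<Rightarrow> real) \<Rightarrow> ('x \<Rightarrow> real) \<Rightarrow> real" where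
  "dot A w r = (\<Sum>k\<in>A. w k * r k)"

lemma vmult_assoc: "vmult B (vmult A w P) Q = vmult A w (\<lambda>k. vmult B (P k) Q)"
  unfolding vmult_def
  by (auto simp: sum_distrib_left sum_distrib_right mult.assoc intro!: ext sum.swap)

lemma dot_vmult: "dot B (vmult A w P) r = dot A w (\<lambda>k. dot B (P k) r)"
  unfolding vmult_def dot_def
  by (auto simp: sum_distrib_left sum_distrib_right mult.assoc intro!: sum.swap)

lemma dot_vmult_right: "dot B r (vmult A w P) = dot A w (\<lambda>k. dot B r (P k))"
  unfolding vmult_def dot_def
  by (auto simp: sum_distrib_left mult.assoc mult.left_commute intro!: sum.swap)

lemma dot_commute: "dot A w r = dot A r w"
  unfolding dot_def by (simp add: mult.commute)

lemma vmult_transpose: "vmult A w (\<lambda>k j. P j k) v = dot A w (P v)"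
  unfolding vmult_def dot_def ..

lemma vmult_cong: "(\<And>k. k \<in> A \<Longrightarrow> w k = w' k) \<Longrightarrow> vmult A w P = vmult A w' P"
  unfolding vmult_def by (auto intro!: ext sum.cong)

lemma vmult_cong_at: "(\<And>k. k \<in> A \<Longrightarrow> P k j = P' k j) \<Longrightarrow> vmult A w P j = vmult A w P' j"
  unfolding vmult_def by (auto intro!: sum.cong)

lemma dot_cong:
  "(\<And>k. k \<in> A \<Longrightarrow> w k = w' k) \<Longrightarrow> (\<And>k. k \<in> A \<Longrightarrow> r k = r' k) \<Longrightarrow> dot A w r = dot A w' r'"
  unfolding dot_def by (auto intro!: sum.cong)

lemma vmult_add_left: "vmult A (\<lambda>k. w k + w' k) P = (\<lambda>j. vmult A w P j + vmult A w' P j)"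
  unfolding vmult_def by (auto simp: distrib_right sum.distrib)

lemma vmult_diff_left: "vmult A (\<lambda>k. w k - w' k) P = (\<lambda>j. vmult A w P j - vmult A w' P j)"
  unfolding vmult_def by (auto simp: left_diff_distrib sum_subtractf)

lemma vmult_sum_left: "vmult A (\<lambda>k. \<Sum>m\<in>I. w m k) P = (\<lambda>j. \<Sum>m\<in>I. vmult A (w m) P j)"
  unfolding vmult_def by (auto simp: sum_distrib_right intro!: ext sum.swap)

lemma vmult_add_right: "vmult A w (\<lambda>k j. P k j + Q k j) = (\<lambda>j. vmult A w P j + vmult A w Q j)"
  unfolding vmult_def by (auto simp: distrib_left sum.distrib)

lemma vmult_sum_right: "vmult A w (\<lambda>k j. \<Sum>m\<in>I. P m k j) = (\<lambda>j. \<Sum>m\<in>I. vmult A w (P m) j)"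
  unfolding vmult_def by (auto simp: sum_distrib_left intro!: ext sum.swap)

lemma dot_add_left: "dot A (\<lambda>k. w k + w' k) r = dot A w r + dot A w' r"
  unfolding dot_def by (auto simp: distrib_right sum.distrib)

lemma dot_diff_left: "dot A (\<lambda>k. w k - w' k) r = dot A w r - dot A w' r"
  unfolding dot_def by (auto simp: left_diff_distrib sum_subtractf)

lemma dot_sum_left: "dot A (\<lambda>k. \<Sum>m\<in>I. w m k) r = (\<Sum>m\<in>I. dot A (w m) r)"
  unfolding dot_def by (auto simp: sum_distrib_right intro!: sum.swap)

lemma dot_add_right: "dot A w (\<lambda>k. r k + r' k) = dot A w r + dot A w r'"
  unfolding dot_def by (auto simp: distrib_left sum.distrib)

lemma dot_diff_right: "dot A w (\<lambda>k. r k - r' k) = dot A w r - dot A w r'"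
  unfolding dot_def by (auto simp: right_diff_distrib sum_subtractf)

lemma dot_sum_right: "dot A w (\<lambda>k. \<Sum>m\<in>I. r m k) = (\<Sum>m\<in>I. dot A w (r m))"
  unfolding dot_def by (auto simp: sum_distrib_left intro!: sum.swap)

lemma vmult_mono_neutral_left:
  "finite B \<Longrightarrow> A \<subseteq> B \<Longrightarrow> (\<And>k. k \<notin> A \<Longrightarrow> w k = 0) \<Longrightarrow> vmult B w P = vmult A w P"
  unfolding vmult_def by (auto intro!: ext sum.mono_neutral_right)

lemma vmult_mono_neutral_right:
  "finite B \<Longrightarrow> A \<subseteq> B \<Longrightarrow> (\<And>k j. k \<notin> A \<Longrightarrow> P k j = 0) \<Longrightarrow> vmult B w P = vmult A w P"
  unfolding vmult_def by (auto intro!: ext sum.mono_neutral_right)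

lemma dot_mono_neutral_left:
  "finite B \<Longrightarrow> A \<subseteq> B \<Longrightarrow> (\<And>k. k \<notin> A \<Longrightarrow> w k = 0) \<Longrightarrow> dot B w r = dot A w r"
  unfolding dot_def by (auto intro!: sum.mono_neutral_right)

lemma dot_mono_neutral_right:
  "finite B \<Longrightarrow> A \<subseteq> B \<Longrightarrow> (\<And>k. k \<notin> A \<Longrightarrow> r k = 0) \<Longrightarrow> dot B w r = dot A w r"
  unfolding dot_def by (auto intro!: sum.mono_neutral_right)

lemma tri_eq_vmult: "finite A \<Longrightarrow> finite B \<Longrightarrow> tri A B P Q R u v = vmult B (vmult A (P u) Q) R v"
  unfolding tri_def vmult_def by (simp add: sum_distrib_right sum.swap[of _ B])

lemma triv_eq_dot: "triv A B P Q r u = dot B (vmult A (P u) Q) r"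
  unfolding triv_def vmult_def dot_def by (simp add: sum_distrib_right sum.swap[of _ A])

lemma vmult_inverse_cancel:
  assumes "is_inv_on A P Q" "finite A" "j \<in> A"
  shows "vmult A (vmult A w P) Q j = w j"
proof -
  have "vmult A (vmult A w P) Q j = vmult A w (\<lambda>k. vmult A (P k) Q) j"
    by (simp only: vmult_assoc)
  also have "\<dots> = (\<Sum>k\<in>A. w k * (if k = j then 1 else 0))"
    using assms unfolding vmult_def is_inv_on_def by (auto intro!: sum.cong)
  also have "\<dots> = w j" using assms by (simp add: if_distrib cong: if_cong)
  finally show ?thesis .
qed

lemma is_inv_on_commute: "is_inv_on A P Q \<Longrightarrow> is_inv_on A Q P"
  unfolding is_inv_on_def by blast

lemma is_inv_on_minv: "invertible_on A P \<Longrightarrow> is_inv_on A P (minv A P)"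
proof -
  assume "invertible_on A P"
  then have "is_inv_on A P (SOME Q. is_inv_on A P Q)"
    unfolding invertible_on_def by (rule someI_ex)
  then show ?thesis unfolding is_inv_on_def minv_def Let_def by (auto cong: sum.cong)
qed

lemma minv_outside: "i \<notin> A \<or> j \<notin> A \<Longrightarrow> minv A P i j = 0"
  unfolding minv_def Let_def by auto

lemma is_inv_on_unique:
  assumes "finite A" "is_inv_on A P Q" "is_inv_on A P Q'" "i \<in> A" "j \<in> A"
  shows "Q i j = Q' i j"
proof -
  have "Q i j = vmult A (vmult A (Q i) P) Q' j"
    using vmult_inverse_cancel[OF assms(3,1,5)] by simp
  also have "\<dots> = vmult A (\<lambda>k. if i = k then 1 else 0) Q' j"
    by (rule arg_cong[where f="\<lambda>w. w j"], rule vmult_cong)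
      (use assms in \<open>auto simp: is_inv_on_def vmult_def\<close>)
  also have "\<dots> = (\<Sum>k\<in>A. if i = k then Q' i j else 0)"
    unfolding vmult_def by (rule sum.cong) auto
  also have "\<dots> = Q' i j" using assms by simp
  finally show ?thesis .
qed

lemma minv_symmetric:
  assumes "finite A" "invertible_on A P" "\<And>i j. P i j = P j i"
  shows "minv A P i j = minv A P j i"
proof (cases "i \<in> A \<and> j \<in> A")
  case True
  have inv: "is_inv_on A P (minv A P)" using is_inv_on_minv assms by blast
  have "is_inv_on A P (\<lambda>a b. minv A P b a)"
    using inv unfolding is_inv_on_def by (simp add: assms(3) mult.commute)
  from is_inv_on_unique[OF assms(1) inv this] True show ?thesis by simp
qed (auto simp: minv_outside)

section \<open>The PIC weight row\<close>

locale pic_setting =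
  fixes \<sigma> :: "'x \<Rightarrow> 'x \<Rightarrow> real" and M :: nat and D U :: "nat \<Rightarrow> 'x set" and S DD :: "'x set"
  assumes sym: "\<And>x x'. \<sigma> x x' = \<sigma> x' x"
    and finD: "finite DD" and DD: "DD = (\<Union>m\<in>{1..M}. D m)"
    and Ddisj: "\<And>i j. i \<in> {1..M} \<Longrightarrow> j \<in> {1..M} \<Longrightarrow> i \<noteq> j \<Longrightarrow> D i \<inter> D j = {}"
    and Udisj: "\<And>i j. i \<in> {1..M} \<Longrightarrow> j \<in> {1..M} \<Longrightarrow> i \<noteq> j \<Longrightarrow> U i \<inter> U j = {}"
    and finS: "finite S"
    and invS: "invertible_on S \<sigma>"
    and invDm: "\<And>m. m \<in> {1..M} \<Longrightarrow> invertible_on (D m) (condcov \<sigma> S)"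
    and invSdd: "invertible_on S (Sddot \<sigma> S M D)"
    and invPIC: "invertible_on DD (PICK \<sigma> S M D)"
begin

abbreviation "Sinv \<equiv> minv S \<sigma>"
abbreviation "C \<equiv> condcov \<sigma> S"
abbreviation "Linv m \<equiv> minv (D m) C"
abbreviation "Sd m \<equiv> Sdot \<sigma> S (D m)"
abbreviation "Sdd \<equiv> Sddot \<sigma> S M D"
abbreviation "Sddinv \<equiv> minv S Sdd"
abbreviation "K \<equiv> PICK \<sigma> S M D"
abbreviation "Kinv \<equiv> minv DD K"
abbreviation "Ph m \<equiv> Phi \<sigma> S (D m)"
abbreviation "Gamma \<equiv> Gam \<sigma> S"
abbreviation "gS u \<equiv> vmult S (\<sigma> u) Sinv"

definition Lam_inv :: "'x \<Rightarrow> 'x \<Rightarrow> real" where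
  "Lam_inv = (\<lambda>d e. \<Sum>m\<in>{1..M}. Linv m d e)"

text \<open>\<open>weight i u\<close> is the row w_u of the closed form above, and \<open>alpha i u\<close> its
  factor \<Phi>^i_{uS} \<Sigma>''^{-1}_{SS}.\<close>
definition alpha :: "nat \<Rightarrow> 'x \<Rightarrow> 'x \<Rightarrow> real" where
  "alpha i u = vmult S (Ph i u) Sddinv"

definition weight :: "nat \<Rightarrow> 'x \<Rightarrow> 'x \<Rightarrow> real" where
  "weight i u = (\<lambda>d. vmult (D i) (C u) (Linv i) d + vmult DD (vmult S (alpha i u) \<sigma>) Lam_inv d)"

text \<open>\<open>psi i u s = \<sigma> u s - Ph i u s\<close>, see \<open>Ph_eq\<close>.\<close>
definition psi :: "nat \<Rightarrow> 'x \<Rightarrow> 'x \<Rightarrow> real" where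
  "psi i u = (\<lambda>s. Sd i u s - vmult S (gS u) (Sd i) s)"

lemma D_subset: "m \<in> {1..M} \<Longrightarrow> D m \<subseteq> DD"
  using DD by auto

lemma finite_D: "m \<in> {1..M} \<Longrightarrow> finite (D m)"
  using D_subset finD finite_subset by blast

lemma Sinv_inverse: "is_inv_on S \<sigma> Sinv"
  by (rule is_inv_on_minv[OF invS])

lemma Sddinv_inverse: "is_inv_on S Sdd Sddinv"
  by (rule is_inv_on_minv[OF invSdd])

lemma Kinv_inverse: "is_inv_on DD K Kinv"
  by (rule is_inv_on_minv[OF invPIC])

lemma Linv_inverse: "m \<in> {1..M} \<Longrightarrow> is_inv_on (D m) C (Linv m)"
  by (rule is_inv_on_minv[OF invDm])

lemma Sinv_sym: "Sinv a b = Sinv b a"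
  by (rule minv_symmetric[OF finS invS sym])

lemma Gamma_row: "Gamma a = vmult S (gS a) \<sigma>"
  unfolding Gam_def by (simp add: tri_eq_vmult finS fun_eq_iff)

lemma Gamma_sym: "Gamma a b = Gamma b a"
  unfolding Gam_def tri_def
  by (subst sum.swap)
    (auto intro!: sum.cong simp: sym[of a] sym[of _ b] Sinv_sym mult.commute mult.left_commute)

lemma C_row: "C u = (\<lambda>j. \<sigma> u j - Gamma u j)"
  unfolding condcov_def by simp

lemma C_sym: "C a b = C b a"
  unfolding condcov_def using Gamma_sym sym by metis

lemma Linv_sym: "m \<in> {1..M} \<Longrightarrow> Linv m a b = Linv m b a"
  by (rule minv_symmetric[OF finite_D invDm C_sym])

lemma Sd_row: "m \<in> {1..M} \<Longrightarrow> Sd m a = vmult (D m) (vmult (D m) (\<sigma> a) (Linv m)) \<sigma>"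
  unfolding Sdot_def by (simp add: tri_eq_vmult finite_D fun_eq_iff)

lemma Sd_sym: "m \<in> {1..M} \<Longrightarrow> Sd m a b = Sd m b a"
  unfolding Sdot_def tri_def
  by (subst sum.swap)
    (auto intro!: sum.cong simp: sym[of a] sym[of _ b] Linv_sym mult.commute mult.left_commute)

lemma Ph_eq: "Ph m a s = \<sigma> a s + vmult S (gS a) (Sd m) s - Sd m a s"
  unfolding Phi_def by (simp add: tri_eq_vmult finS)

lemma dot_sigma: "dot A z (\<sigma> v) = vmult A z \<sigma> v"
  unfolding dot_def vmult_def by (simp add: sym[of v])

lemma vmult_Sinv_sigma: "vmult S (vmult S x Sinv) \<sigma> v = dot S x (gS v)"
proof -
  have "vmult S (Sinv k) \<sigma> v = gS v k" for k
    unfolding vmult_def by (rule sum.cong[OF refl]) (metis Sinv_sym sym mult.commute)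
  then show ?thesis unfolding vmult_assoc by (simp add: dot_def vmult_def)
qed

lemma vmult_Linv_outside: "k \<notin> D m \<Longrightarrow> vmult A x (Linv m) k = 0"
  unfolding vmult_def by (simp add: minv_outside)

lemma vmult_Lam_inv: "vmult DD x Lam_inv = (\<lambda>e. \<Sum>m\<in>{1..M}. vmult (D m) x (Linv m) e)"
proof -
  have "vmult DD x Lam_inv = (\<lambda>e. \<Sum>m\<in>{1..M}. vmult DD x (Linv m) e)"
    unfolding Lam_inv_def by (rule vmult_sum_right)
  also have "\<dots> = (\<lambda>e. \<Sum>m\<in>{1..M}. vmult (D m) x (Linv m) e)"
    by (intro ext sum.cong refl, subst vmult_mono_neutral_right[OF finD D_subset])
      (auto simp: minv_outside)
  finally show ?thesis .
qed

lemma sum_single_block: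
  assumes "m0 \<in> {1..M}" "e \<in> D m0"
  shows "(\<Sum>m\<in>{1..M}. if e \<in> D m then f m else 0) = f m0"
proof -
  have "(\<Sum>m\<in>{1..M}. if e \<in> D m then f m else 0) = (\<Sum>m\<in>{1..M}. if m = m0 then f m else 0)"
  proof (intro sum.cong refl)
    fix m assume m: "m \<in> {1..M}"
    have "e \<in> D m \<longleftrightarrow> m = m0" using Ddisj[OF m assms(1)] assms by blast
    then show "(if e \<in> D m then f m else 0) = (if m = m0 then f m else 0)" by simp
  qed
  also have "\<dots> = f m0" using assms by simp
  finally show ?thesis .
qed

lemma Linv_Lam:
  assumes m: "m \<in> {1..M}" and e: "e \<in> DD"
  shows "vmult DD (vmult (D m) x (Linv m)) (Lam \<sigma> S M D) e = (if e \<in> D m then x e else 0)"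
proof -
  have "vmult DD (vmult (D m) x (Linv m)) (Lam \<sigma> S M D) e
      = vmult (D m) (vmult (D m) x (Linv m)) (Lam \<sigma> S M D) e"
    by (subst vmult_mono_neutral_left[OF finD D_subset[OF m]]) (auto simp: vmult_Linv_outside)
  also have "\<dots> = (if e \<in> D m then x e else 0)"
  proof (cases "e \<in> D m")
    case True
    have "vmult (D m) (vmult (D m) x (Linv m)) (Lam \<sigma> S M D) e
        = vmult (D m) (vmult (D m) x (Linv m)) C e"
      by (rule vmult_cong_at) (use m True in \<open>auto simp: Lam_def\<close>)
    also have "\<dots> = x e"
      by (rule vmult_inverse_cancel[OF is_inv_on_commute[OF Linv_inverse[OF m]] finite_D[OF m] True])
    finally show ?thesis using True by simp
  next
    case False
    have "Lam \<sigma> S M D k e = 0" if k: "k \<in> D m" for k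
    proof (rule ccontr)
      assume "Lam \<sigma> S M D k e \<noteq> 0"
      then obtain m' where m': "m' \<in> {1..M}" "k \<in> D m'" "e \<in> D m'"
        unfolding Lam_def by (auto split: if_splits)
      then show False using Ddisj[OF m'(1) m] False k by auto
    qed
    then have "vmult (D m) (vmult (D m) x (Linv m)) (Lam \<sigma> S M D) e = 0"
      unfolding vmult_def by simp
    then show ?thesis using False by simp
  qed
  finally show ?thesis .
qed

lemma Lam_inv_Lam:
  assumes e: "e \<in> DD"
  shows "vmult DD (vmult DD x Lam_inv) (Lam \<sigma> S M D) e = x e"
proof -
  from e DD obtain m0 where m0: "m0 \<in> {1..M}" "e \<in> D m0" by auto
  have "vmult DD (vmult DD x Lam_inv) (Lam \<sigma> S M D) e
      = (\<Sum>m\<in>{1..M}. vmult DD (vmult (D m) x (Linv m)) (Lam \<sigma> S M D) e)"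
    by (simp add: vmult_Lam_inv vmult_sum_left)
  also have "\<dots> = (\<Sum>m\<in>{1..M}. if e \<in> D m then x e else 0)"
    using Linv_Lam e by (intro sum.cong) auto
  also have "\<dots> = x e" by (rule sum_single_block[OF m0])
  finally show ?thesis .
qed

lemma vmult_Sd:
  assumes m: "m \<in> {1..M}"
  shows "vmult (D m) (vmult (D m) (vmult S a \<sigma>) (Linv m)) \<sigma> = vmult S a (Sd m)"
proof -
  have "Sd m = (\<lambda>k. vmult (D m) (vmult (D m) (\<sigma> k) (Linv m)) \<sigma>)"
    using Sd_row[OF m] by auto
  then show ?thesis by (simp only: vmult_assoc[where A=S])
qed

lemma local_weight_sigma:
  assumes i: "i \<in> {1..M}"
  shows "vmult (D i) (vmult (D i) (C u) (Linv i)) \<sigma> = psi i u"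
proof -
  have "vmult (D i) (vmult (D i) (C u) (Linv i)) \<sigma>
      = (\<lambda>j. vmult (D i) (vmult (D i) (\<sigma> u) (Linv i)) \<sigma> j
            - vmult (D i) (vmult (D i) (vmult S (gS u) \<sigma>) (Linv i)) \<sigma> j)"
    by (simp only: C_row vmult_diff_left Gamma_row)
  also have "\<dots> = psi i u"
    unfolding psi_def vmult_Sd[OF i] by (simp add: Sd_row[OF i])
  finally show ?thesis .
qed

lemma Lam_inv_sigma: "vmult DD (vmult DD (vmult S a \<sigma>) Lam_inv) \<sigma> = (\<lambda>s. vmult S a Sdd s - vmult S a \<sigma> s)"
proof -
  have "vmult DD (vmult DD (vmult S a \<sigma>) Lam_inv) \<sigma>
      = (\<lambda>j. \<Sum>m\<in>{1..M}. vmult DD (vmult (D m) (vmult S a \<sigma>) (Linv m)) \<sigma> j)"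
    by (simp only: vmult_Lam_inv vmult_sum_left)
  also have "\<dots> = (\<lambda>j. \<Sum>m\<in>{1..M}. vmult S a (Sd m) j)"
  proof (intro ext sum.cong refl)
    fix j m assume m: "m \<in> {1..M}"
    have "vmult DD (vmult (D m) (vmult S a \<sigma>) (Linv m)) \<sigma>
        = vmult (D m) (vmult (D m) (vmult S a \<sigma>) (Linv m)) \<sigma>"
      by (rule vmult_mono_neutral_left[OF finD D_subset[OF m]]) (simp add: vmult_Linv_outside)
    then show "vmult DD (vmult (D m) (vmult S a \<sigma>) (Linv m)) \<sigma> j = vmult S a (Sd m) j"
      using vmult_Sd[OF m] by simp
  qed
  also have "\<dots> = vmult S a (\<lambda>k j. \<Sum>m\<in>{1..M}. Sd m k j)"
    by (simp only: vmult_sum_right)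
  also have "\<dots> = (\<lambda>s. vmult S a Sdd s - vmult S a \<sigma> s)"
    unfolding Sddot_def vmult_add_right by simp
  finally show ?thesis .
qed

lemma weight_sigma_S:
  assumes i: "i \<in> {1..M}" and s: "s \<in> S"
  shows "vmult DD (weight i u) \<sigma> s = \<sigma> u s - vmult S (alpha i u) \<sigma> s"
proof -
  have "vmult DD (vmult (D i) (C u) (Linv i)) \<sigma> = psi i u"
    using local_weight_sigma[OF i]
      vmult_mono_neutral_left[OF finD D_subset[OF i], of "vmult (D i) (C u) (Linv i)" \<sigma>]
    by (simp add: vmult_Linv_outside)
  moreover have "vmult S (alpha i u) Sdd s = Ph i u s"
    unfolding alpha_def by (rule vmult_inverse_cancel[OF is_inv_on_commute[OF Sddinv_inverse] finS s])
  ultimately show ?thesis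
    unfolding weight_def vmult_add_left Lam_inv_sigma psi_def Ph_eq by simp
qed

lemma weight_Gamma:
  assumes i: "i \<in> {1..M}"
  shows "vmult DD (weight i u) Gamma e = Gamma u e - vmult S (alpha i u) \<sigma> e"
proof -
  have "vmult DD (weight i u) Gamma = vmult S (vmult S (vmult DD (weight i u) \<sigma>) Sinv) \<sigma>"
    unfolding Gamma_row[abs_def] by (simp only: vmult_assoc)
  also have "vmult S (vmult DD (weight i u) \<sigma>) Sinv = vmult S (\<lambda>s. \<sigma> u s - vmult S (alpha i u) \<sigma> s) Sinv"
    by (rule vmult_cong) (rule weight_sigma_S[OF i])
  also have "vmult S (vmult S (\<lambda>s. \<sigma> u s - vmult S (alpha i u) \<sigma> s) Sinv) \<sigma>
      = (\<lambda>j. vmult S (gS u) \<sigma> j - vmult S (vmult S (vmult S (alpha i u) \<sigma>) Sinv) \<sigma> j)"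
    by (simp only: vmult_diff_left)
  also have "vmult S (vmult S (vmult S (alpha i u) \<sigma>) Sinv) \<sigma> = vmult S (alpha i u) \<sigma>"
    by (rule vmult_cong) (rule vmult_inverse_cancel[OF Sinv_inverse finS])
  finally show ?thesis by (simp add: Gamma_row[abs_def])
qed

lemma GamT_row:
  assumes i: "i \<in> {1..M}" and u: "u \<in> U i"
  shows "GamT \<sigma> S M D U u e = Gamma u e + (if e \<in> D i then C u e else 0)"
proof -
  have "(\<exists>m\<in>{1..M}. u \<in> U m \<and> e \<in> D m) \<longleftrightarrow> e \<in> D i"
    using Udisj[OF _ i] i u by blast
  then show ?thesis unfolding GamT_def by (simp add: condcov_def)
qed

lemma weight_K:
  assumes i: "i \<in> {1..M}" and u: "u \<in> U i" and e: "e \<in> DD"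
  shows "vmult DD (weight i u) K e = GamT \<sigma> S M D U u e"
proof -
  have "vmult DD (weight i u) (Lam \<sigma> S M D) e = (if e \<in> D i then C u e else 0) + vmult S (alpha i u) \<sigma> e"
    unfolding weight_def vmult_add_left using Linv_Lam[OF i e] Lam_inv_Lam[OF e] by simp
  then show ?thesis
    unfolding PICK_def vmult_add_right using weight_Gamma[OF i] GamT_row[OF i u] by simp
qed

lemma GamT_Kinv:
  assumes i: "i \<in> {1..M}" and u: "u \<in> U i" and d: "d \<in> DD"
  shows "vmult DD (GamT \<sigma> S M D U u) Kinv d = weight i u d"
proof -
  have "vmult DD (GamT \<sigma> S M D U u) Kinv = vmult DD (vmult DD (weight i u) K) Kinv"
    by (rule vmult_cong) (simp add: weight_K[OF i u])
  then show ?thesis using vmult_inverse_cancel[OF Kinv_inverse finD d] by simp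
qed

section \<open>Predictive mean and covariance\<close>

lemma ydot_eq:
  "ydot \<mu> \<sigma> y S Dm = (\<lambda>k. dot Dm (vmult Dm (\<sigma> k) (minv Dm C)) (\<lambda>l. y l - \<mu> l))"
  unfolding ydot_def triv_eq_dot by (rule ext) simp

lemma dot_Linv_vmult:
  "dot (D m) (vmult (D m) (vmult S a \<sigma>) (Linv m)) r
     = dot S a (\<lambda>k. dot (D m) (vmult (D m) (\<sigma> k) (Linv m)) r)"
  by (simp only: vmult_assoc dot_vmult)

lemma dot_local_weight_residual:
  assumes i: "i \<in> {1..M}"
  shows "dot DD (vmult (D i) (C u) (Linv i)) (\<lambda>l. y l - \<mu> l)
       = ydot \<mu> \<sigma> y S (D i) u - dot S (gS u) (ydot \<mu> \<sigma> y S (D i))"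
proof -
  have "dot DD (vmult (D i) (C u) (Linv i)) (\<lambda>l. y l - \<mu> l)
      = dot (D i) (vmult (D i) (C u) (Linv i)) (\<lambda>l. y l - \<mu> l)"
    by (rule dot_mono_neutral_left[OF finD D_subset[OF i]]) (simp add: vmult_Linv_outside)
  also have "\<dots> = dot (D i) (vmult (D i) (\<sigma> u) (Linv i)) (\<lambda>l. y l - \<mu> l)
      - dot (D i) (vmult (D i) (vmult S (gS u) \<sigma>) (Linv i)) (\<lambda>l. y l - \<mu> l)"
    by (simp only: C_row vmult_diff_left dot_diff_left Gamma_row)
  finally show ?thesis unfolding dot_Linv_vmult ydot_eq .
qed

lemma dot_Lam_inv_residual:
  "dot DD (vmult DD (vmult S a \<sigma>) Lam_inv) (\<lambda>l. y l - \<mu> l) = dot S a (yddot \<mu> \<sigma> y S M D)"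
proof -
  have "dot DD (vmult (D m) (vmult S a \<sigma>) (Linv m)) (\<lambda>l. y l - \<mu> l) = dot S a (ydot \<mu> \<sigma> y S (D m))"
    if m: "m \<in> {1..M}" for m
  proof -
    have "dot DD (vmult (D m) (vmult S a \<sigma>) (Linv m)) (\<lambda>l. y l - \<mu> l)
        = dot (D m) (vmult (D m) (vmult S a \<sigma>) (Linv m)) (\<lambda>l. y l - \<mu> l)"
      by (rule dot_mono_neutral_left[OF finD D_subset[OF m]]) (simp add: vmult_Linv_outside)
    then show ?thesis unfolding dot_Linv_vmult ydot_eq by simp
  qed
  then show ?thesis
    unfolding vmult_Lam_inv dot_sum_left yddot_def dot_sum_right by simp
qed

lemma mean_eq:
  assumes i: "i \<in> {1..M}" and u: "u \<in> U i"
  shows "mu_pPIC \<mu> \<sigma> y S M D i u = mu_PIC \<mu> \<sigma> y S M D U u"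
proof -
  have "mu_PIC \<mu> \<sigma> y S M D U u = \<mu> u + dot DD (weight i u) (\<lambda>l. y l - \<mu> l)"
    unfolding mu_PIC_def DD[symmetric] triv_eq_dot
    by (simp add: GamT_Kinv[OF i u] cong: dot_cong)
  also have "\<dots> = \<mu> u + (ydot \<mu> \<sigma> y S (D i) u - dot S (gS u) (ydot \<mu> \<sigma> y S (D i)))
      + dot S (alpha i u) (yddot \<mu> \<sigma> y S M D)"
    unfolding weight_def dot_add_left dot_local_weight_residual[OF i] dot_Lam_inv_residual by simp
  finally show ?thesis unfolding mu_pPIC_def triv_eq_dot alpha_def by simp
qed

lemma dot_sigma_Linv_C:
  assumes j: "j \<in> {1..M}"
  shows "dot (D j) (vmult (D j) (\<sigma> s) (Linv j)) (C v) = \<sigma> v s - Ph j v s"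
proof -
  have "dot (D j) (vmult (D j) (\<sigma> s) (Linv j)) (C v)
      = dot (D j) (vmult (D j) (\<sigma> s) (Linv j)) (\<sigma> v)
        - dot (D j) (vmult (D j) (\<sigma> s) (Linv j)) (vmult S (gS v) \<sigma>)"
    by (simp only: C_row Gamma_row dot_diff_right)
  also have "dot (D j) (vmult (D j) (\<sigma> s) (Linv j)) (\<sigma> v) = Sd j v s"
    unfolding dot_sigma Sd_row[OF j, symmetric] by (rule Sd_sym[OF j])
  also have "dot (D j) (vmult (D j) (\<sigma> s) (Linv j)) (vmult S (gS v) \<sigma>) = vmult S (gS v) (Sd j) s"
    unfolding dot_vmult_right dot_sigma Sd_row[OF j, symmetric]
    by (simp add: Sd_sym[OF j] vmult_def dot_def)
  finally show ?thesis unfolding Ph_eq by simp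
qed

lemma dot_Lam_inv_C:
  assumes j: "j \<in> {1..M}"
  shows "dot (D j) (vmult DD (vmult S a \<sigma>) Lam_inv) (C v) = vmult S a \<sigma> v - dot S a (Ph j v)"
proof -
  let ?block = "\<lambda>m. dot (D j) (vmult (D m) (vmult S a \<sigma>) (Linv m)) (C v)"
  have "dot (D j) (vmult DD (vmult S a \<sigma>) Lam_inv) (C v) = (\<Sum>m\<in>{1..M}. ?block m)"
    by (simp only: vmult_Lam_inv dot_sum_left)
  also have "\<dots> = (\<Sum>m\<in>{1..M}. if m = j then ?block j else 0)"
  proof (rule sum.cong[OF refl])
    fix m assume m: "m \<in> {1..M}"
    show "?block m = (if m = j then ?block j else 0)"
    proof (cases "m = j")
      case False
      then have "k \<notin> D m" if "k \<in> D j" for k using Ddisj[OF m j] that by blast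
      then show ?thesis using False unfolding dot_def by (simp add: vmult_Linv_outside)
    qed simp
  qed
  also have "\<dots> = dot S a (\<lambda>s. \<sigma> v s - Ph j v s)"
    using j unfolding dot_Linv_vmult by (auto simp: dot_sigma_Linv_C[OF j] intro!: dot_cong)
  finally show ?thesis by (simp only: dot_diff_right dot_sigma)
qed

lemma Sigma_PIC_expand:
  assumes i: "i \<in> {1..M}" and u: "u \<in> U i" and j: "j \<in> {1..M}" and v: "v \<in> U j"
  shows "Sigma_PIC \<sigma> S M D U u v = \<sigma> u v
    - (Gamma u v + dot (D j) (vmult (D i) (C u) (Linv i)) (C v) - dot S (alpha i u) (Ph j v))"
proof -
  have "Sigma_PIC \<sigma> S M D U u v
      = \<sigma> u v - dot DD (vmult DD (GamT \<sigma> S M D U u) Kinv) (GamT \<sigma> S M D U v)"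
    unfolding Sigma_PIC_def DD[symmetric] tri_eq_vmult[OF finD finD] vmult_transpose ..
  also have "dot DD (vmult DD (GamT \<sigma> S M D U u) Kinv) (GamT \<sigma> S M D U v)
      = dot DD (weight i u) (\<lambda>d. Gamma v d + (if d \<in> D j then C v d else 0))"
    by (rule dot_cong) (auto simp: GamT_Kinv[OF i u] GamT_row[OF j v])
  also have "dot DD (weight i u) (\<lambda>d. Gamma v d + (if d \<in> D j then C v d else 0))
      = dot DD (weight i u) (Gamma v) + dot (D j) (weight i u) (C v)"
    unfolding dot_add_right
    by (subst dot_mono_neutral_right[OF finD D_subset[OF j]]) (auto intro!: dot_cong)
  also have "dot DD (weight i u) (Gamma v) = Gamma u v - vmult S (alpha i u) \<sigma> v"
    using weight_Gamma[OF i, of u v] unfolding dot_def vmult_def by (simp add: Gamma_sym)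
  also have "dot (D j) (weight i u) (C v) = dot (D j) (vmult (D i) (C u) (Linv i)) (C v)
      + (vmult S (alpha i u) \<sigma> v - dot S (alpha i u) (Ph j v))"
    unfolding weight_def dot_add_left dot_Lam_inv_C[OF j] ..
  finally show ?thesis by simp
qed

lemma local_weight_C:
  assumes i: "i \<in> {1..M}"
  shows "dot (D i) (vmult (D i) (C u) (Linv i)) (C v) = psi i u v - dot S (gS v) (psi i u)"
proof -
  have "dot (D i) (vmult (D i) (C u) (Linv i)) (C v)
      = dot (D i) (vmult (D i) (C u) (Linv i)) (\<sigma> v)
        - dot (D i) (vmult (D i) (C u) (Linv i)) (vmult S (gS v) \<sigma>)"
    by (simp only: C_row Gamma_row dot_diff_right)
  also have "\<dots> = psi i u v - dot S (gS v) (psi i u)"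
    unfolding dot_vmult_right dot_sigma local_weight_sigma[OF i] ..
  finally show ?thesis .
qed

lemma tri_Ph_Sinv_sigma: "tri S S (Ph i) Sinv \<sigma> u v = Gamma u v - dot S (gS v) (psi i u)"
proof -
  have "tri S S (Ph i) Sinv \<sigma> u v = dot S (\<lambda>s. \<sigma> u s - psi i u s) (gS v)"
    unfolding tri_eq_vmult[OF finS finS] vmult_Sinv_sigma
    by (rule dot_cong) (auto simp: Ph_eq psi_def)
  also have "\<dots> = Gamma u v - dot S (gS v) (psi i u)"
    by (simp only: dot_diff_left Gamma_row vmult_Sinv_sigma dot_commute[of S "psi i u"])
  finally show ?thesis .
qed

lemma Sigma_pPIC_eq:
  assumes i: "i \<in> {1..M}" and u: "u \<in> U i" and j: "j \<in> {1..M}" and v: "v \<in> U j"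
  shows "Sigma_pPIC \<sigma> S M D i j u v = Sigma_PIC \<sigma> S M D U u v"
proof -
  have alpha_Ph: "tri S S (Ph i) Sddinv (\<lambda>s w. Ph j w s) u v = dot S (alpha i u) (Ph j v)"
    unfolding tri_eq_vmult[OF finS finS] alpha_def vmult_transpose ..
  show ?thesis
  proof (cases "i = j")
    case False
    have "vmult (D i) (C u) (Linv i) k = 0" if "k \<in> D j" for k
      using Ddisj[OF i j False] that by (auto intro: vmult_Linv_outside)
    then have "dot (D j) (vmult (D i) (C u) (Linv i)) (C v) = 0"
      unfolding dot_def by simp
    with False show ?thesis
      unfolding Sigma_pPIC_def Sigma_PIC_expand[OF i u j v] alpha_Ph condcov_def by simp
  next
    case True
    have "tri S S \<sigma> Sinv (Sd i) u v = vmult S (gS u) (Sd i) v"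
      unfolding tri_eq_vmult[OF finS finS] ..
    with True alpha_Ph local_weight_C[OF i] tri_Ph_Sinv_sigma show ?thesis
      unfolding Sigma_pPIC_def Sigma_PIC_expand[OF i u j v] psi_def by simp
  qed
qed

end

theorem theorem2:
  fixes \<mu> :: "'x \<Rightarrow> real" and \<sigma> :: "'x \<Rightarrow> 'x \<Rightarrow> real" and y :: "'x \<Rightarrow> real"
    and M :: nat and D U :: "nat \<Rightarrow> 'x set" and S DD UU :: "'x set"
  assumes sym: "\<And>x x'. \<sigma> x x' = \<sigma> x' x"
    and psd: "\<And>F c. finite F \<Longrightarrow> (\<Sum>x\<in>F. \<Sum>x'\<in>F. c x * \<sigma> x x' * c x') \<ge> 0"
    and M: "M \<ge> 1"
    and finD: "finite DD" and DD: "DD = (\<Union>m\<in>{1..M}. D m)"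
    and Ddisj: "\<And>i j. i \<in> {1..M} \<Longrightarrow> j \<in> {1..M} \<Longrightarrow> i \<noteq> j \<Longrightarrow> D i \<inter> D j = {}"
    and Dcard: "\<And>m. m \<in> {1..M} \<Longrightarrow> card (D m) * M = card DD"
    and finU: "finite UU" and UU: "UU = (\<Union>m\<in>{1..M}. U m)"
    and UD: "UU \<inter> DD = {}"
    and Udisj: "\<And>i j. i \<in> {1..M} \<Longrightarrow> j \<in> {1..M} \<Longrightarrow> i \<noteq> j \<Longrightarrow> U i \<inter> U j = {}"
    and Ucard: "\<And>m. m \<in> {1..M} \<Longrightarrow> card (U m) * M = card UU"
    and finS: "finite S"
    and invS: "invertible_on S \<sigma>"
    and invDm: "\<And>m. m \<in> {1..M} \<Longrightarrow> invertible_on (D m) (condcov \<sigma> S)"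
    and invSdd: "invertible_on S (Sddot \<sigma> S M D)"
    and invPIC: "invertible_on DD (PICK \<sigma> S M D)"
  shows "(\<forall>m\<in>{1..M}. \<forall>u\<in>U m. mu_pPIC \<mu> \<sigma> y S M D m u = mu_PIC \<mu> \<sigma> y S M D U u)
       \<and> (\<forall>i\<in>{1..M}. \<forall>j\<in>{1..M}. \<forall>u\<in>U i. \<forall>v\<in>U j.
            Sigma_pPIC \<sigma> S M D i j u v = Sigma_PIC \<sigma> S M D U u v)"
proof -
  interpret pic_setting \<sigma> M D U S DD
    by unfold_locales (fact sym finD DD Ddisj Udisj finS invS invDm invSdd invPIC)+
  show ?thesis using mean_eq Sigma_pPIC_eq by blast
qed

end
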